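(* Let $L_0\in\mathbb{R}^{n\times n}$ have reduced SVD $L_0=U\Sigma V^*$, let $\lambda>0$, let $\Omega_{\mathrm{obs}}\subset[n]\times[n]$, let $\Omega\subset\Omega_{\mathrm{obs}}$, let $\Gamma=\Omega_{\mathrm{obs}}\setminus\Omega$, and let $S_0'$ be a matrix supported on $\Omega$. Assume $\|\mathcal{P}_{\Gamma^\perp}\mathcal{P}_T\|<1$. Then $(L_0,S_0')$ is the unique solution of \[ \text{minimize } \|L\|_*+\lambda\|S\|_1\quad\text{subject to}\quad\mathcal{P}_{\Omega_{\mathrm{obs}}}(L+S)=\mathcal{P}_{\Omega_{\mathrm{obs}}}L_0+S_0' \] if there is a pair $(W,F)$ obeying \[ UV^*+W=\lambda(\mathrm{sgn}(S_0')+F), \] with $\mathcal{P}_TW=0$, $\|W\|<1$, $\mathcal{P}_{\Gamma^\perp}F=0$ and $\|F\|_\infty<1$.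
   Context: $U,V\in\mathbb{R}^{n\times r}$ have orthonormal columns; $T=\{UX^*+YV^*: X,Y\in\mathbb{R}^{n\times r}\}$ and $\mathcal{P}_T$ is the orthogonal projection onto $T$ (trace inner product). For an index set $A$, $\mathcal{P}_A$ keeps entries in $A$ and zeroes the rest; $\mathcal{P}_{\Gamma^\perp}=\mathcal{I}-\mathcal{P}_\Gamma$ keeps the entries outside $\Gamma$. $\|\mathcal{P}_{\Gamma^\perp}\mathcal{P}_T\|$ is the operator norm w.r.t. the Frobenius norm; $\|W\|$ is the spectral norm, $\|F\|_\infty=\max_{ij}|F_{ij}|$, $\|\cdot\|_*$ the nuclear norm, $\|S\|_1=\sum_{ij}|S_{ij}|$, $\mathrm{sgn}$ the entrywise sign with $\mathrm{sgn}(0)=0$. *)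

theory Defs
  imports "HOL-Analysis.Analysis"
begin

text \<open>Square real n x n matrices are rendered as real^'n^'n with 'n a finite index type.
  The Euclidean inner product / norm on real^'n^'n is exactly the trace inner product /
  Frobenius norm.\<close>

type_synonym 'n sqmat = "real^'n^'n"

definition tangent_space :: "'n::finite sqmat \<Rightarrow> 'n sqmat \<Rightarrow> 'n sqmat set" where
  "tangent_space U V = {U ** transpose X + Y ** transpose V | X Y. True}"

definition orth_proj :: "'n::finite sqmat set \<Rightarrow> 'n sqmat \<Rightarrow> 'n sqmat" where
  "orth_proj T M = (THE P. P \<in> T \<and> (\<forall>Z\<in>T. inner (M - P) Z = 0))"

definition P_T :: "'n::finite sqmat \<Rightarrow> 'n sqmat \<Rightarrow> 'n sqmat \<Rightarrow> 'n sqmat" where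
  "P_T U V = orth_proj (tangent_space U V)"

definition P_idx :: "('n::finite \<times> 'n) set \<Rightarrow> 'n sqmat \<Rightarrow> 'n sqmat" where
  "P_idx A M = (\<chi> i j. if (i, j) \<in> A then M $ i $ j else 0)"

definition spec_norm :: "'n::finite sqmat \<Rightarrow> real" where
  "spec_norm W = onorm (\<lambda>x. W *v x)"

definition max_norm :: "'n::finite sqmat \<Rightarrow> real" where
  "max_norm F = Max {\<bar>F $ i $ j\<bar> | i j. True}"

definition l1_norm :: "'n::finite sqmat \<Rightarrow> real" where
  "l1_norm S = (\<Sum>i\<in>UNIV. \<Sum>j\<in>UNIV. \<bar>S $ i $ j\<bar>)"

definition sgn_mat :: "'n::finite sqmat \<Rightarrow> 'n sqmat" where
  "sgn_mat S = (\<chi> i j. sgn (S $ i $ j))"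

definition psd :: "'n::finite sqmat \<Rightarrow> bool" where
  "psd P \<longleftrightarrow> transpose P = P \<and> (\<forall>x. 0 \<le> x \<bullet> (P *v x))"

text \<open>Nuclear norm ||A||_* = tr sqrt(A^* A) (= sum of singular values).\<close>
definition nuc_norm :: "'n::finite sqmat \<Rightarrow> real" where
  "nuc_norm A = trace (THE P. psd P \<and> P ** P = transpose A ** A)"

text \<open>Reduced SVD L0 = U Sigma V^* with r = card K columns: the columns of U, V indexed by K
  are orthonormal, all other columns are zero, and Sigma is diagonal with positive
  entries exactly on K (so r = 0, i.e. L0 = 0, is allowed).\<close>
definition reduced_svd :: "'n::finite sqmat \<Rightarrow> 'n set \<Rightarrow> 'n sqmat \<Rightarrow> 'n sqmat \<Rightarrow> 'n sqmat \<Rightarrow> bool" where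
  "reduced_svd L K U Sig V \<longleftrightarrow>
     (\<forall>k\<in>K. \<forall>l\<in>K. column k U \<bullet> column l U = (if k = l then 1 else 0)) \<and>
     (\<forall>k\<in>K. \<forall>l\<in>K. column k V \<bullet> column l V = (if k = l then 1 else 0)) \<and>
     (\<forall>k. k \<notin> K \<longrightarrow> column k U = 0 \<and> column k V = 0) \<and>
     (\<forall>i j. Sig $ i $ j = (if i = j \<and> i \<in> K then Sig $ i $ i else 0)) \<and>
     (\<forall>k\<in>K. Sig $ k $ k > 0) \<and>
     L = U ** Sig ** transpose V"

definition feasible :: "('n::finite \<times> 'n) set \<Rightarrow> 'n sqmat \<Rightarrow> 'n sqmat \<Rightarrow> 'n sqmat \<Rightarrow> 'n sqmat \<Rightarrow> bool" where
  "feasible Obs L0 S0 L S \<longleftrightarrow> P_idx Obs (L + S) = P_idx Obs L0 + S0"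

definition objective :: "real \<Rightarrow> 'n::finite sqmat \<Rightarrow> 'n sqmat \<Rightarrow> real" where
  "objective lam L S = nuc_norm L + lam * l1_norm S"

definition unique_solution ::
  "real \<Rightarrow> ('n::finite \<times> 'n) set \<Rightarrow> 'n sqmat \<Rightarrow> 'n sqmat \<Rightarrow> 'n sqmat \<Rightarrow> 'n sqmat \<Rightarrow> bool" where
  "unique_solution lam Obs L0 S0 L' S' \<longleftrightarrow>
     feasible Obs L0 S0 L' S' \<and>
     (\<forall>L S. feasible Obs L0 S0 L S \<longrightarrow> objective lam L' S' \<le> objective lam L S) \<and>
     (\<forall>L S. feasible Obs L0 S0 L S \<and> objective lam L S = objective lam L' S' \<longrightarrow> L = L' \<and> S = S')"

end

theory Submission
  imports Defs
begin

text \<open>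
  A dual certificate argument. For every \<open>W' \<perp> T\<close> with \<open>\<parallel>W'\<parallel> \<le> 1\<close> the matrix \<open>U V\<^sup>* + W'\<close>
  is again a contraction, and \<open>\<langle>U V\<^sup>*, L0\<rangle> = \<parallel>L0\<parallel>\<^sub>*\<close>. Replacing \<open>W\<close> by
  \<open>W + \<epsilon> P\<^sub>T\<^sub>\<perp> H\<close> for small \<open>\<epsilon> > 0\<close> therefore gives
  \<open>\<parallel>L0 + H\<parallel>\<^sub>* \<ge> \<parallel>L0\<parallel>\<^sub>* + \<langle>U V\<^sup>* + W, H\<rangle> + \<epsilon> \<parallel>P\<^sub>T\<^sub>\<perp> H\<parallel>\<^sup>2\<close>, and entrywise
  \<open>\<parallel>S0' + D\<parallel>\<^sub>1 \<ge> \<parallel>S0'\<parallel>\<^sub>1 + \<langle>sgn S0' + F, D\<rangle> + (1 - \<parallel>F\<parallel>\<^sub>\<infinity>) \<parallel>P\<^sub>\<Omega>\<^sub>\<perp> D\<parallel>\<^sub>1\<close>.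
  Both linear terms are pairings with \<open>\<lambda> (sgn S0' + F) = U V\<^sup>* + W\<close>, which is supported
  on \<open>\<Omega>\<^sub>o\<^sub>b\<^sub>s\<close>, while every feasible direction \<open>(H, D)\<close> has \<open>H + D = 0\<close> there; so they
  cancel and only the two nonnegative gains remain. If the objective does not increase,
  both gains vanish: \<open>H \<in> T\<close> and \<open>D = 0\<close> off \<open>\<Omega>\<close>, hence \<open>H = 0\<close> on \<open>\<Gamma>\<close>, i.e.
  \<open>H = P\<^sub>\<Gamma>\<^sub>\<perp> P\<^sub>T H\<close>, and \<open>\<parallel>P\<^sub>\<Gamma>\<^sub>\<perp> P\<^sub>T\<parallel> < 1\<close> forces \<open>H = 0\<close> and then \<open>D = 0\<close>.

  The nuclear norm \<open>tr \<surd>(A\<^sup>T A)\<close> is evaluated by diagonalising \<open>A\<^sup>T A\<close>; the spectral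
  theorem is obtained from maximisers of the Rayleigh quotient.
\<close>

lemma linear_coeff_eq_0_if_nonneg:
  fixes b c :: real
  assumes nonneg: "\<And>t. 0 \<le> t * b + t\<^sup>2 * c"
  shows "b = 0"
proof (rule ccontr)
  assume "b \<noteq> 0"
  define e where "e = \<bar>c\<bar>"
  define t where "t = - b / (e + 1)"
  have "e \<ge> 0" by (simp add: e_def)
  then have b_eq: "b = - t * (e + 1)" and "t \<noteq> 0"
    using \<open>b \<noteq> 0\<close> by (simp_all add: t_def)
  have "t * b + t\<^sup>2 * c \<le> t * b + t\<^sup>2 * e"
    by (intro add_left_mono mult_left_mono) (auto simp: e_def)
  also have "\<dots> = - t\<^sup>2"
    by (simp add: b_eq algebra_simps power2_eq_square)
  also have "\<dots> < 0"
    using \<open>t \<noteq> 0\<close> by simp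
  finally show False
    using nonneg[of t] by linarith
qed

lemma inner_transpose_matrix_vector:
  "(transpose A *v x) \<bullet> y = x \<bullet> ((A :: real^'n^'m) *v y)"
  by (simp add: dot_lmul_matrix)

lemma inner_symmetric_matrix_vector:
  "transpose A = A \<Longrightarrow> (A *v x) \<bullet> y = x \<bullet> ((A :: real^'n^'n) *v y)"
  by (metis inner_transpose_matrix_vector)

lemma column_matrix_mult: "column j (X ** Y) = X *v column j (Y :: real^'c^'b)"
  by (simp add: column_def matrix_matrix_mult_def matrix_vector_mult_def vec_eq_iff)

lemma column_zero [simp]: "column j 0 = 0"
  by (simp add: column_def vec_eq_iff)

lemma matrix_eq_columns: "(\<And>j. column j X = column j Y) \<Longrightarrow> X = (Y :: 'a^'c^'b)"
  by (simp add: column_def vec_eq_iff)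

lemma transpose_mult_entry:
  "(transpose X ** Y) $ i $ j = column i X \<bullet> column j (Y :: real^'c^'b)"
  by (simp add: column_def matrix_matrix_mult_def transpose_def inner_vec_def mult.commute)

lemma trace_transpose_mult:
  "trace (transpose X ** Y) = (\<Sum>i\<in>UNIV. column i X \<bullet> column i (Y :: real^'c^'b))"
  by (simp add: trace_def transpose_mult_entry)

lemma inner_matrix_eq_trace: "X \<bullet> Y = trace (transpose X ** (Y :: real^'c^'b))"
proof -
  have "X \<bullet> Y = (\<Sum>i\<in>UNIV. \<Sum>j\<in>UNIV. X$i$j * Y$i$j)"
    by (simp add: inner_vec_def)
  also have "\<dots> = (\<Sum>j\<in>UNIV. \<Sum>i\<in>UNIV. X$i$j * Y$i$j)"
    by (rule sum.swap)
  finally show ?thesis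
    by (simp add: trace_transpose_mult inner_vec_def column_def)
qed

lemma inner_matrix_mult_left: "X \<bullet> (U ** B) = (transpose U ** X) \<bullet> (B :: real^'n^'n)"
  by (simp add: inner_matrix_eq_trace matrix_transpose_mul matrix_mul_assoc)

lemma inner_matrix_mult_right: "X \<bullet> (C ** transpose V) = (X ** V) \<bullet> (C :: real^'n^'n)"
  unfolding inner_matrix_eq_trace
  using trace_mul_sym[of "transpose X ** C" "transpose V"]
  by (simp add: matrix_transpose_mul matrix_mul_assoc)

definition diag_mat :: "('n::finite \<Rightarrow> real) \<Rightarrow> real^'n^'n" where
  "diag_mat d = (\<chi> i j. if i = j then d i else 0)"

lemma matrix_mult_diag_mat_entry: "(X ** diag_mat d) $ i $ j = X $ i $ j * d j"
  by (simp add: matrix_matrix_mult_def diag_mat_def if_distrib cong: if_cong)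

lemma column_mult_diag_mat: "column j (X ** diag_mat d) = d j *\<^sub>R column j X"
  by (simp add: vec_eq_iff column_def matrix_mult_diag_mat_entry mult.commute)

lemma diag_mat_mult: "diag_mat d ** diag_mat e = diag_mat (\<lambda>i. d i * e i)"
  by (simp add: vec_eq_iff matrix_mult_diag_mat_entry) (simp add: diag_mat_def)

lemma transpose_diag_mat [simp]: "transpose (diag_mat d) = diag_mat d"
  by (simp add: vec_eq_iff transpose_def diag_mat_def)

lemma trace_diag_mat: "trace (diag_mat d) = sum d UNIV"
  by (simp add: trace_def diag_mat_def)

lemma diag_mat_vector_mult: "(diag_mat d *v x) $ i = d i * x $ i"
  by (simp add: matrix_vector_mult_def diag_mat_def if_distrib if_distribR cong del: if_weak_cong)

lemma inner_diag_mat: "x \<bullet> (diag_mat d *v x) = (\<Sum>i\<in>UNIV. d i * (x $ i)\<^sup>2)"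
  by (simp add: inner_vec_def diag_mat_vector_mult power2_eq_square mult_ac)

section \<open>The spectral theorem\<close>

lemma rayleigh_bound_imp_eigenvector:
  fixes A :: "real^'n^'n"
  assumes sym: "transpose A = A" and S: "subspace S" and inv: "\<forall>x\<in>S. A *v x \<in> S"
    and x0: "x0 \<in> S" "x0 \<bullet> x0 = 1"
    and bound: "\<forall>z\<in>S. z \<bullet> (A *v z) \<le> (x0 \<bullet> (A *v x0)) * (z \<bullet> z)"
  shows "A *v x0 = (x0 \<bullet> (A *v x0)) *\<^sub>R x0"
proof -
  define l where "l = x0 \<bullet> (A *v x0)"
  define y where "y = A *v x0 - l *\<^sub>R x0"
  \<comment> \<open>\<open>y \<perp> x0\<close>, and the bound along \<open>x0 + t y\<close> is a quadratic in \<open>t\<close> with linear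
    coefficient \<open>-2 \<parallel>y\<parallel>\<^sup>2\<close>.\<close>
  have "y \<in> S"
    unfolding y_def using S inv x0(1) by (simp add: subspace_diff subspace_scale)
  have x0_y: "x0 \<bullet> y = 0"
    by (simp add: y_def l_def inner_diff_right x0(2))
  have y_Ax0: "y \<bullet> (A *v x0) = y \<bullet> y"
    by (simp add: y_def inner_diff_right inner_diff_left l_def x0(2) inner_commute)
  have x0_Ay: "x0 \<bullet> (A *v y) = y \<bullet> y"
    using y_Ax0 inner_symmetric_matrix_vector[OF sym, of x0 y] by (simp add: inner_commute)
  have "0 \<le> t * (- 2 * (y \<bullet> y)) + t\<^sup>2 * (l * (y \<bullet> y) - y \<bullet> (A *v y))" for t
  proof -
    have "x0 + t *\<^sub>R y \<in> S"
      using S x0(1) \<open>y \<in> S\<close> by (simp add: subspace_add subspace_scale)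
    then have "(x0 + t *\<^sub>R y) \<bullet> (A *v (x0 + t *\<^sub>R y)) \<le> l * ((x0 + t *\<^sub>R y) \<bullet> (x0 + t *\<^sub>R y))"
      using bound l_def by blast
    then show ?thesis
      by (simp add: matrix_vector_right_distrib matrix_vector_mult_scaleR inner_add_left
          inner_add_right inner_commute[of y x0] x0_y y_Ax0 x0_Ay x0(2) l_def[symmetric]
          power2_eq_square algebra_simps)
  qed
  then have "- 2 * (y \<bullet> y) = 0"
    by (rule linear_coeff_eq_0_if_nonneg)
  then show ?thesis
    by (simp add: y_def l_def)
qed

lemma rayleigh_maximizer_exists:
  fixes A :: "real^'n^'n"
  assumes S: "subspace S" and "S \<noteq> {0}"
  obtains x0 where "x0 \<in> S" "x0 \<bullet> x0 = 1"
    "\<forall>z\<in>S. z \<bullet> (A *v z) \<le> (x0 \<bullet> (A *v x0)) * (z \<bullet> z)"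
proof -
  define C where "C = S \<inter> sphere 0 1"
  obtain v where v: "v \<in> S" "v \<noteq> 0"
    using assms subspace_0 by blast
  then have "(1 / norm v) *\<^sub>R v \<in> C"
    using S by (simp add: C_def subspace_scale)
  then have "C \<noteq> {}" by blast
  moreover have "compact C"
    unfolding C_def by (intro closed_Int_compact closed_subspace S compact_sphere)
  moreover have "continuous_on C (\<lambda>z. z \<bullet> (A *v z))"
    by (intro continuous_intros linear_continuous_on
        matrix_vector_mul_linear[unfolded linear_conv_bounded_linear])
  ultimately obtain x0 where x0: "x0 \<in> C" and max: "\<forall>z\<in>C. z \<bullet> (A *v z) \<le> x0 \<bullet> (A *v x0)"
    using continuous_attains_sup by blast
  have "z \<bullet> (A *v z) \<le> (x0 \<bullet> (A *v x0)) * (z \<bullet> z)" if "z \<in> S" for z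
  proof (cases "z = 0")
    case False
    define u where "u = (1 / norm z) *\<^sub>R z"
    have "u \<in> C"
      using that S False by (simp add: C_def u_def subspace_scale)
    then have "u \<bullet> (A *v u) \<le> x0 \<bullet> (A *v x0)"
      using max by blast
    moreover have "u \<bullet> (A *v u) = (z \<bullet> (A *v z)) / (z \<bullet> z)"
      by (simp add: u_def matrix_vector_mult_scaleR power2_norm_eq_inner[symmetric] power2_eq_square)
    moreover have "z \<bullet> z > 0"
      using False by simp
    ultimately show ?thesis
      by (simp add: divide_le_eq mult.commute)
  qed simp
  moreover have "x0 \<in> S" "x0 \<bullet> x0 = 1"
    using x0 by (auto simp: C_def norm_eq_1)
  ultimately show ?thesis
    using that by blast
qed

lemma symmetric_invariant_orthogonal_complement:
  fixes A :: "real^'n^'n"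
  assumes sym: "transpose A = A" and S: "subspace S" and inv: "\<forall>x\<in>S. A *v x \<in> S"
    and x0: "x0 \<in> S" "x0 \<bullet> x0 = 1" and eig: "A *v x0 = l *\<^sub>R x0"
  defines "S' \<equiv> S \<inter> {y. orthogonal x0 y}"
  shows "subspace S'" "\<forall>x\<in>S'. A *v x \<in> S'" "dim S' < dim S"
    and "\<And>y. y \<in> S \<Longrightarrow> y - (x0 \<bullet> y) *\<^sub>R x0 \<in> S'"
proof -
  show "subspace S'"
    unfolding S'_def by (intro subspace_inter S subspace_orthogonal_to_vector)
  show "\<forall>x\<in>S'. A *v x \<in> S'"
  proof
    fix x assume x: "x \<in> S'"
    have "x0 \<bullet> (A *v x) = (A *v x0) \<bullet> x"
      by (rule inner_symmetric_matrix_vector[OF sym, symmetric])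
    also have "\<dots> = 0"
      using x by (simp add: eig S'_def orthogonal_def)
    finally show "A *v x \<in> S'"
      using x inv by (auto simp: S'_def orthogonal_def)
  qed
  have "x0 \<notin> S'"
    using x0(2) by (simp add: S'_def orthogonal_def)
  then have "S' \<subset> S"
    using x0(1) by (auto simp: S'_def)
  then show "dim S' < dim S"
    using \<open>subspace S'\<close> S by (metis dim_psubset span_eq_iff)
  show "y - (x0 \<bullet> y) *\<^sub>R x0 \<in> S'" if "y \<in> S" for y
    using that x0 S
    by (auto simp: S'_def orthogonal_def subspace_diff subspace_scale inner_diff_right)
qed

lemma symmetric_invariant_subspace_eigenbasis:
  fixes A :: "real^'n^'n"
  assumes sym: "transpose A = A"
  shows "subspace S \<Longrightarrow> \<forall>x\<in>S. A *v x \<in> S \<Longrightarrow>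
    \<exists>B. B \<subseteq> S \<and> pairwise orthogonal B \<and> (\<forall>x\<in>B. x \<bullet> x = 1) \<and> span B = S \<and>
        (\<forall>x\<in>B. A *v x = (x \<bullet> (A *v x)) *\<^sub>R x)"
proof (induction "dim S" arbitrary: S rule: less_induct)
  case less
  show ?case
  proof (cases "S = {0}")
    case True
    then show ?thesis
      by (intro exI[of _ "{}"]) auto
  next
    case False
    then obtain x0 where x0: "x0 \<in> S" "x0 \<bullet> x0 = 1"
      and bound: "\<forall>z\<in>S. z \<bullet> (A *v z) \<le> (x0 \<bullet> (A *v x0)) * (z \<bullet> z)"
      using rayleigh_maximizer_exists less.prems(1) by blast
    define l where "l = x0 \<bullet> (A *v x0)"
    have eig: "A *v x0 = l *\<^sub>R x0"
      unfolding l_def by (rule rayleigh_bound_imp_eigenvector[OF sym less.prems x0 bound])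
    define S' where "S' = S \<inter> {y. orthogonal x0 y}"
    note S' = symmetric_invariant_orthogonal_complement[OF sym less.prems x0 eig, folded S'_def]
    obtain B where B: "B \<subseteq> S'" "pairwise orthogonal B" "\<forall>x\<in>B. x \<bullet> x = 1"
        "span B = S'" "\<forall>x\<in>B. A *v x = (x \<bullet> (A *v x)) *\<^sub>R x"
      using less.hyps[OF S'(3,1,2)] by blast
    have "S \<subseteq> span (insert x0 B)"
    proof
      fix y assume "y \<in> S"
      then have "y - (x0 \<bullet> y) *\<^sub>R x0 \<in> S'"
        by (rule S'(4))
      then show "y \<in> span (insert x0 B)"
        unfolding span_breakdown_eq B(4)[symmetric] by (auto simp: scalar_mult_eq_scaleR)
    qed
    moreover have "span (insert x0 B) \<subseteq> S"
      using B(1) x0(1) less.prems(1) by (intro span_minimal) (auto simp: S'_def)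
    ultimately show ?thesis
      using B x0 eig l_def
      by (intro exI[of _ "insert x0 B"])
        (auto simp: pairwise_insert S'_def orthogonal_commute)
  qed
qed

lemma symmetric_matrix_diagonalization:
  fixes A :: "real^'n^'n"
  assumes sym: "transpose A = A"
  obtains Q \<mu> where "orthogonal_matrix Q" "A = Q ** diag_mat \<mu> ** transpose Q"
proof -
  obtain B where B: "pairwise orthogonal B" "\<forall>x\<in>B. x \<bullet> x = 1" "span B = UNIV"
      "\<forall>x\<in>B. A *v x = (x \<bullet> (A *v x)) *\<^sub>R x"
    using symmetric_invariant_subspace_eigenbasis[OF sym, of UNIV] by auto
  have "independent B"
    using B(1,2) pairwise_orthogonal_independent by fastforce
  then have "finite B" "card B = dim (span B)"
    using indep_card_eq_dim_span dim_span by metis+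
  moreover have "card B = CARD('n)"
    using calculation(2) by (simp add: B(3))
  ultimately obtain f where f: "bij_betw f (UNIV :: 'n set) B"
    by (metis finite_class.finite_UNIV finite_same_card_bij)
  define Q where "Q = (\<chi> i j. f j $ i)"
  define \<mu> where "\<mu> j = f j \<bullet> (A *v f j)" for j
  have col: "column j Q = f j" for j
    by (simp add: Q_def column_def vec_eq_iff)
  have "orthogonal_matrix Q"
    using B(1,2) f unfolding orthogonal_matrix_orthonormal_columns col
    by (auto simp: pairwise_def bij_betw_def inj_on_def norm_eq_1) blast
  moreover have "A ** Q = Q ** diag_mat \<mu>"
  proof (rule matrix_eq_columns)
    fix j
    have "A *v f j = \<mu> j *\<^sub>R f j"
      using B(4) f by (auto simp: \<mu>_def dest: bij_betwE)
    then show "column j (A ** Q) = column j (Q ** diag_mat \<mu>)"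
      unfolding column_mult_diag_mat by (simp add: column_matrix_mult col)
  qed
  then have "A = Q ** diag_mat \<mu> ** transpose Q"
    using \<open>orthogonal_matrix Q\<close>
    by (metis matrix_mul_assoc matrix_mul_rid orthogonal_matrix_def)
  ultimately show ?thesis
    using that by blast
qed

section \<open>Positive semidefinite square roots and the nuclear norm\<close>

lemma psd_quadratic_form_eq_0_imp:
  assumes P: "psd P" and x: "x \<bullet> (P *v x) = 0"
  shows "P *v x = 0"
proof -
  define y where "y = P *v x"
  have sym: "transpose P = P"
    using P by (simp add: psd_def)
  have "0 \<le> t * (2 * (y \<bullet> y)) + t\<^sup>2 * (y \<bullet> (P *v y))" for t
  proof -
    have "0 \<le> (x + t *\<^sub>R y) \<bullet> (P *v (x + t *\<^sub>R y))"
      using P by (simp add: psd_def)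
    moreover have "x \<bullet> (P *v y) = y \<bullet> y"
      using inner_symmetric_matrix_vector[OF sym, of x y] by (simp add: y_def)
    moreover have "x \<bullet> y = 0"
      using x by (simp add: y_def)
    ultimately show ?thesis
      by (simp add: matrix_vector_right_distrib matrix_vector_mult_scaleR inner_add_left
          inner_add_right y_def[symmetric] power2_eq_square algebra_simps)
  qed
  then have "2 * (y \<bullet> y) = 0"
    by (rule linear_coeff_eq_0_if_nonneg)
  then show ?thesis
    by (simp add: y_def)
qed

text \<open>For \<open>D = P - Q\<close> one has
  \<open>P D + D Q = P\<^sup>2 - Q\<^sup>2 = 0\<close>, and taking the trace against \<open>D\<close> gives a sum of
  nonnegative quadratic forms, so \<open>P\<close> and \<open>Q\<close> both annihilate every column of \<open>D\<close>.\<close>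

lemma psd_sqrt_unique:
  assumes P: "psd P" and Q: "psd Q" and eq: "P ** P = Q ** Q"
  shows "P = Q"
proof -
  define D where "D = P - Q"
  have symD: "transpose D = D"
    using P Q by (simp add: D_def psd_def transpose_def vec_eq_iff)
  have "P ** D + D ** Q = 0"
    using eq by (simp add: D_def matrix_add_ldistrib[of P P "- Q", simplified]
        matrix_matrix_mult_def vec_eq_iff sum_subtractf algebra_simps)
  then have "trace (D ** (P ** D)) + trace (D ** (D ** Q)) = 0"
    by (simp only: matrix_add_ldistrib[symmetric] trace_add[symmetric]) (simp add: trace_def)
  moreover have "trace (D ** (D ** Q)) = trace (D ** (Q ** D))"
    using trace_mul_sym[of D "D ** Q"] by (simp add: matrix_mul_assoc)
  moreover have "trace (D ** (X ** D)) = (\<Sum>i\<in>UNIV. column i D \<bullet> (X *v column i D))" for X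
    using trace_transpose_mult[of D "X ** D"] by (simp add: symD column_matrix_mult)
  ultimately have "(\<Sum>i\<in>UNIV. column i D \<bullet> (P *v column i D))
      + (\<Sum>i\<in>UNIV. column i D \<bullet> (Q *v column i D)) = 0"
    by simp
  moreover have "0 \<le> column i D \<bullet> (P *v column i D)" "0 \<le> column i D \<bullet> (Q *v column i D)" for i
    using P Q by (simp_all add: psd_def)
  ultimately have "column i D \<bullet> (P *v column i D) = 0" "column i D \<bullet> (Q *v column i D) = 0" for i
    by (simp_all add: add_nonneg_eq_0_iff sum_nonneg sum_nonneg_eq_0_iff)
  then have "P *v column i D = 0" "Q *v column i D = 0" for i
    using psd_quadratic_form_eq_0_imp[OF P] psd_quadratic_form_eq_0_imp[OF Q] by blast+
  then have "D ** D = 0"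
    by (intro matrix_eq_columns) (simp add: column_matrix_mult D_def matrix_vector_mult_diff_rdistrib)
  then have "column i D \<bullet> column i D = 0" for i
    using transpose_mult_entry[of D D i i] symD by simp
  then have "D = 0"
    by (intro matrix_eq_columns) simp
  then show ?thesis
    by (simp add: D_def)
qed

lemma nuc_norm_eqI: "psd P \<Longrightarrow> P ** P = transpose A ** A \<Longrightarrow> nuc_norm A = trace P"
  unfolding nuc_norm_def
  by (rule arg_cong[where f = trace], rule the1_equality) (auto intro: psd_sqrt_unique)

lemma psd_conj_diag_mat:
  assumes "\<And>i. 0 \<le> d i"
  shows "psd (X ** diag_mat d ** transpose X)"
  unfolding psd_def
proof (intro conjI allI)
  show "transpose (X ** diag_mat d ** transpose X) = X ** diag_mat d ** transpose X"
    by (simp add: matrix_transpose_mul matrix_mul_assoc)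
  fix x
  have "x \<bullet> ((X ** diag_mat d ** transpose X) *v x)
      = (transpose X *v x) \<bullet> (diag_mat d *v (transpose X *v x))"
    by (simp only: inner_transpose_matrix_vector matrix_vector_mul_assoc matrix_mul_assoc)
  also have "\<dots> \<ge> 0"
    unfolding inner_diag_mat using assms by (intro sum_nonneg mult_nonneg_nonneg) auto
  finally show "0 \<le> x \<bullet> ((X ** diag_mat d ** transpose X) *v x)" .
qed

lemma norm_eigenvector_gram:
  fixes A :: "real^'n^'m"
  assumes "(transpose A ** A) *v q = \<mu> *\<^sub>R q" "q \<bullet> q = 1"
  shows "norm (A *v q) = sqrt \<mu>"
proof -
  have "(A *v q) \<bullet> (A *v q) = ((transpose A ** A) *v q) \<bullet> q"
    unfolding matrix_vector_mul_assoc[symmetric] by (rule inner_transpose_matrix_vector[symmetric])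
  then show ?thesis
    using assms by (simp add: norm_eq_sqrt_inner)
qed

text \<open>The columns of \<open>Q\<close> diagonalise \<open>A\<^sup>T A\<close>: they are right singular vectors of \<open>A\<close>.\<close>

lemma nuc_norm_singular_basis:
  fixes A :: "real^'n^'n"
  obtains Q :: "real^'n^'n" where "orthogonal_matrix Q"
    "nuc_norm A = (\<Sum>i\<in>UNIV. norm (A *v column i Q))"
proof -
  have "transpose (transpose A ** A) = transpose A ** A"
    by (simp add: matrix_transpose_mul)
  then obtain Q \<mu> where Q: "orthogonal_matrix Q"
    and diag: "transpose A ** A = Q ** diag_mat \<mu> ** transpose Q"
    using symmetric_matrix_diagonalization by blast
  have QtQ: "transpose Q ** Q = mat 1" and QQt: "Q ** transpose Q = mat 1"
    using Q by (simp_all add: orthogonal_matrix_def)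
  have norm_col: "norm (A *v column i Q) = sqrt (\<mu> i)" for i
  proof (rule norm_eigenvector_gram)
    have "transpose A ** A ** Q = Q ** diag_mat \<mu>"
      by (simp add: diag matrix_mul_assoc[symmetric] QtQ)
    then have "column i (transpose A ** A ** Q) = column i (Q ** diag_mat \<mu>)"
      by simp
    then show "(transpose A ** A) *v column i Q = \<mu> i *\<^sub>R column i Q"
      by (simp only: column_mult_diag_mat column_matrix_mult[where X = "transpose A ** A"])
    show "column i Q \<bullet> column i Q = 1"
      using Q by (simp add: orthogonal_matrix_orthonormal_columns norm_eq_1)
  qed
  then have mu_nonneg: "0 \<le> \<mu> i" for i
    by (metis norm_ge_zero real_sqrt_ge_0_iff)
  define P where "P = Q ** diag_mat (\<lambda>i. sqrt (\<mu> i)) ** transpose Q"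
  have "psd P"
    unfolding P_def by (rule psd_conj_diag_mat) (simp add: mu_nonneg)
  moreover have "P ** P = transpose A ** A"
    unfolding P_def diag
    by (simp add: matrix_mul_assoc[symmetric], simp add: matrix_mul_assoc QtQ diag_mat_mult mu_nonneg)
  ultimately have "nuc_norm A = trace P"
    by (rule nuc_norm_eqI)
  also have "\<dots> = trace (diag_mat (\<lambda>i. sqrt (\<mu> i)) ** (transpose Q ** Q))"
    unfolding P_def
    using trace_mul_sym[of Q "diag_mat (\<lambda>i. sqrt (\<mu> i)) ** transpose Q"]
    by (simp add: matrix_mul_assoc)
  also have "\<dots> = (\<Sum>i\<in>UNIV. norm (A *v column i Q))"
    by (simp add: QtQ trace_diag_mat norm_col)
  finally show ?thesis
    using Q that by blast
qed

lemma inner_eq_sum_orthogonal_columns: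
  fixes M A :: "real^'n^'n"
  assumes "orthogonal_matrix Q"
  shows "M \<bullet> A = (\<Sum>i\<in>UNIV. (M *v column i Q) \<bullet> (A *v column i Q))"
proof -
  have "M \<bullet> A = trace (transpose M ** A ** (Q ** transpose Q))"
    using assms by (simp add: inner_matrix_eq_trace orthogonal_matrix_def)
  also have "\<dots> = trace (transpose (M ** Q) ** (A ** Q))"
    using trace_mul_sym[of "transpose M ** A ** Q" "transpose Q"]
    by (simp add: matrix_transpose_mul matrix_mul_assoc)
  finally show ?thesis
    by (simp add: trace_transpose_mult column_matrix_mult)
qed

lemma inner_le_nuc_norm:
  fixes M A :: "real^'n^'n"
  assumes contraction: "\<And>x. norm (M *v x) \<le> norm x"
  shows "M \<bullet> A \<le> nuc_norm A"
proof -
  obtain Q :: "real^'n^'n" where Q: "orthogonal_matrix Q"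
    and nuc: "nuc_norm A = (\<Sum>i\<in>UNIV. norm (A *v column i Q))"
    by (rule nuc_norm_singular_basis)
  have "(M *v column i Q) \<bullet> (A *v column i Q) \<le> norm (A *v column i Q)" for i
  proof -
    have "norm (M *v column i Q) \<le> 1"
      using contraction[of "column i Q"] Q by (simp add: orthogonal_matrix_orthonormal_columns)
    then have "norm (M *v column i Q) * norm (A *v column i Q) \<le> norm (A *v column i Q)"
      by (simp add: mult_left_le_one_le)
    then show ?thesis
      using norm_cauchy_schwarz order_trans by blast
  qed
  then show ?thesis
    unfolding inner_eq_sum_orthogonal_columns[OF Q] nuc by (rule sum_mono)
qed

lemma tangent_space_subspace: "subspace (tangent_space U V)"
  unfolding subspace_def tangent_space_def
proof (intro conjI ballI allI)
  show "0 \<in> {U ** transpose X + Y ** transpose V |X Y. True}"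
    by (intro CollectI exI[of _ 0]) (simp add: transpose_def vec_eq_iff matrix_matrix_mult_def)
next
  fix x y assume "x \<in> {U ** transpose X + Y ** transpose V |X Y. True}"
    "y \<in> {U ** transpose X + Y ** transpose V |X Y. True}"
  then obtain X1 Y1 X2 Y2 where "x = U ** transpose X1 + Y1 ** transpose V"
    "y = U ** transpose X2 + Y2 ** transpose V" by blast
  then show "x + y \<in> {U ** transpose X + Y ** transpose V |X Y. True}"
    by (intro CollectI exI[of _ "X1 + X2"] exI[of _ "Y1 + Y2"])
      (simp add: transpose_def matrix_matrix_mult_def vec_eq_iff sum.distrib algebra_simps)
next
  fix c :: real and x assume "x \<in> {U ** transpose X + Y ** transpose V |X Y. True}"
  then obtain X1 Y1 where "x = U ** transpose X1 + Y1 ** transpose V" by blast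
  then show "c *\<^sub>R x \<in> {U ** transpose X + Y ** transpose V |X Y. True}"
    by (intro CollectI exI[of _ "c *\<^sub>R X1"] exI[of _ "c *\<^sub>R Y1"])
      (simp add: transpose_scalar matrix_scalar_ac scalar_matrix_assoc[symmetric] scaleR_add_right)
qed

lemma mult_mult_transpose_in_tangent_space: "U ** X ** transpose V \<in> tangent_space U V"
proof -
  have "U ** X ** transpose V = U ** transpose (V ** transpose X) + 0 ** transpose V"
    by (simp add: matrix_transpose_mul matrix_mul_assoc)
  then show ?thesis
    unfolding tangent_space_def by blast
qed

lemma orthogonal_tangent_space_imp:
  assumes orth: "\<forall>Z\<in>tangent_space U V. W \<bullet> Z = 0"
  shows "transpose U ** W = 0" "W ** V = 0"
proof -
  have "U ** transpose (transpose (transpose U ** W)) + 0 ** transpose V \<in> tangent_space U V"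
    unfolding tangent_space_def by blast
  then have "W \<bullet> (U ** (transpose U ** W)) = 0"
    using orth by simp
  then show "transpose U ** W = 0"
    using inner_matrix_mult_left[of W U "transpose U ** W"] by simp
  have "U ** transpose 0 + (W ** V) ** transpose V \<in> tangent_space U V"
    unfolding tangent_space_def by blast
  moreover have "U ** transpose 0 + (W ** V) ** transpose V = (W ** V) ** transpose V"
    by (simp add: transpose_def vec_eq_iff matrix_matrix_mult_def)
  ultimately have "W \<bullet> ((W ** V) ** transpose V) = 0"
    using orth by simp
  then show "W ** V = 0"
    using inner_matrix_mult_right[of W "W ** V" V] by simp
qed

lemma orth_proj_ex1:
  fixes T :: "'a::euclidean_space set"
  assumes "subspace T"
  shows "\<exists>!P. P \<in> T \<and> (\<forall>Z\<in>T. (M - P) \<bullet> Z = 0)"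
proof -
  obtain y z where y: "y \<in> span T" and z: "\<And>w. w \<in> span T \<Longrightarrow> orthogonal z w"
    and yz: "M = y + z"
    using orthogonal_subspace_decomp_exists[of T M] by metis
  have "y \<in> T"
    using y assms span_eq_iff by blast
  moreover have "(M - y) \<bullet> Z = 0" if "Z \<in> T" for Z
    using z[OF span_base[OF that]] yz by (simp add: orthogonal_def)
  ultimately have "y \<in> T \<and> (\<forall>Z\<in>T. (M - y) \<bullet> Z = 0)"
    by blast
  moreover have "P1 = P2" if "P1 \<in> T \<and> (\<forall>Z\<in>T. (M - P1) \<bullet> Z = 0)"
      "P2 \<in> T \<and> (\<forall>Z\<in>T. (M - P2) \<bullet> Z = 0)" for P1 P2
  proof -
    have "P1 - P2 \<in> T"
      using that assms by (simp add: subspace_diff)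
    then have "(M - P2) \<bullet> (P1 - P2) - (M - P1) \<bullet> (P1 - P2) = 0"
      using that by simp
    then have "(P1 - P2) \<bullet> (P1 - P2) = 0"
      by (simp add: inner_diff_left)
    then show ?thesis
      by simp
  qed
  ultimately show ?thesis
    by blast
qed

lemma orth_proj_in: "subspace T \<Longrightarrow> orth_proj T M \<in> T"
  and orth_proj_orthogonal: "subspace T \<Longrightarrow> Z \<in> T \<Longrightarrow> (M - orth_proj T M) \<bullet> Z = 0"
  using theI'[OF orth_proj_ex1, of T M] unfolding orth_proj_def by blast+

lemma orth_proj_eqI:
  "subspace T \<Longrightarrow> P \<in> T \<Longrightarrow> (\<And>Z. Z \<in> T \<Longrightarrow> (M - P) \<bullet> Z = 0) \<Longrightarrow> orth_proj T M = P"
  unfolding orth_proj_def by (rule the1_equality[OF orth_proj_ex1]) blast+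

lemma P_T_in_tangent_space: "P_T U V M \<in> tangent_space U V"
  unfolding P_T_def by (rule orth_proj_in[OF tangent_space_subspace])

lemma P_T_orthogonal: "Z \<in> tangent_space U V \<Longrightarrow> (M - P_T U V M) \<bullet> Z = 0"
  unfolding P_T_def by (rule orth_proj_orthogonal[OF tangent_space_subspace])

lemma P_T_eq_0_imp_orthogonal: "P_T U V M = 0 \<Longrightarrow> Z \<in> tangent_space U V \<Longrightarrow> M \<bullet> Z = 0"
  using P_T_orthogonal[of Z U V M] by simp

lemma P_T_eqI:
  "P \<in> tangent_space U V \<Longrightarrow> (\<And>Z. Z \<in> tangent_space U V \<Longrightarrow> (M - P) \<bullet> Z = 0) \<Longrightarrow>
    P_T U V M = P"
  unfolding P_T_def by (rule orth_proj_eqI[OF tangent_space_subspace])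

lemma linear_P_T: "linear (P_T U V)"
proof
  fix M N
  show "P_T U V (M + N) = P_T U V M + P_T U V N"
  proof (rule P_T_eqI)
    show "P_T U V M + P_T U V N \<in> tangent_space U V"
      by (intro subspace_add tangent_space_subspace P_T_in_tangent_space)
    fix Z assume "Z \<in> tangent_space U V"
    moreover have "M + N - (P_T U V M + P_T U V N) = (M - P_T U V M) + (N - P_T U V N)"
      by simp
    ultimately show "(M + N - (P_T U V M + P_T U V N)) \<bullet> Z = 0"
      by (simp only: inner_add_left P_T_orthogonal)
  qed
next
  fix c :: real and M
  show "P_T U V (c *\<^sub>R M) = c *\<^sub>R P_T U V M"
  proof (rule P_T_eqI)
    show "c *\<^sub>R P_T U V M \<in> tangent_space U V"
      by (intro subspace_scale tangent_space_subspace P_T_in_tangent_space)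
    fix Z assume "Z \<in> tangent_space U V"
    then show "(c *\<^sub>R M - c *\<^sub>R P_T U V M) \<bullet> Z = 0"
      by (simp only: scaleR_diff_right[symmetric] inner_scaleR_left P_T_orthogonal mult_zero_right)
  qed
qed

lemma linear_P_idx: "linear (P_idx A)"
  by (rule linearI) (simp_all add: P_idx_def vec_eq_iff)

lemma transpose_mult_eq_diag_mat_indicator:
  assumes orth: "\<forall>k\<in>K. \<forall>l\<in>K. column k U \<bullet> column l U = (if k = l then 1 else 0)"
    and zero: "\<forall>k. k \<notin> K \<longrightarrow> column k U = 0"
  shows "transpose U ** U = diag_mat (indicator K)"
proof -
  have "(transpose U ** U) $ k $ l = diag_mat (indicator K) $ k $ l" for k l
    unfolding transpose_mult_entry diag_mat_def
    using orth zero by (cases "k \<in> K"; cases "l \<in> K") auto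
  then show ?thesis
    by (simp add: vec_eq_iff)
qed

lemma reduced_svdD:
  assumes "reduced_svd L K U Sig V"
  shows "transpose U ** U = diag_mat (indicator K)" "transpose V ** V = diag_mat (indicator K)"
    and "V ** diag_mat (indicator K) = V"
    and "diag_mat (indicator K) ** diag_mat (\<lambda>k. Sig $ k $ k) = diag_mat (\<lambda>k. Sig $ k $ k)"
    and "\<And>k. 0 \<le> Sig $ k $ k"
    and "L = U ** diag_mat (\<lambda>k. Sig $ k $ k) ** transpose V"
proof -
  have U: "\<forall>k\<in>K. \<forall>l\<in>K. column k U \<bullet> column l U = (if k = l then 1 else 0)"
    and V: "\<forall>k\<in>K. \<forall>l\<in>K. column k V \<bullet> column l V = (if k = l then 1 else 0)"
    and zero: "\<And>k. k \<notin> K \<Longrightarrow> column k U = 0 \<and> column k V = 0"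
    and diag: "\<And>i j. Sig $ i $ j = (if i = j \<and> i \<in> K then Sig $ i $ i else 0)"
    and pos: "\<And>k. k \<in> K \<Longrightarrow> Sig $ k $ k > 0"
    and L: "L = U ** Sig ** transpose V"
    using assms unfolding reduced_svd_def by blast+
  show "transpose U ** U = diag_mat (indicator K)" "transpose V ** V = diag_mat (indicator K)"
    using U V zero by (simp_all add: transpose_mult_eq_diag_mat_indicator)
  show "V ** diag_mat (indicator K) = V"
    using zero by (intro matrix_eq_columns) (simp add: column_mult_diag_mat indicator_def)
  have off_K: "Sig $ k $ k = 0" if "k \<notin> K" for k
    using diag[of k k] that by metis
  have off_diag: "Sig $ i $ j = 0" if "i \<noteq> j" for i j
    using diag[of i j] that by metis
  have "indicator K k * Sig $ k $ k = Sig $ k $ k" for k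
    using off_K by (cases "k \<in> K") simp_all
  then show "diag_mat (indicator K) ** diag_mat (\<lambda>k. Sig $ k $ k) = diag_mat (\<lambda>k. Sig $ k $ k)"
    by (simp only: diag_mat_mult)
  show "0 \<le> Sig $ k $ k" for k
    using pos off_K by (cases "k \<in> K") (auto simp: less_imp_le)
  have "Sig = diag_mat (\<lambda>k. Sig $ k $ k)"
    using off_diag by (simp add: diag_mat_def vec_eq_iff)
  then show "L = U ** diag_mat (\<lambda>k. Sig $ k $ k) ** transpose V"
    using L by simp
qed

lemma nuc_norm_partial_isometry_factorization:
  fixes U V :: "real^'n^'n"
  assumes UU: "transpose U ** U = E" and VV: "transpose V ** V = E"
    and ED: "E ** diag_mat d = diag_mat d" and d: "\<And>k. 0 \<le> d k"
  shows "nuc_norm (U ** diag_mat d ** transpose V)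
    = (U ** transpose V) \<bullet> (U ** diag_mat d ** transpose V)"
proof -
  define P where "P = V ** diag_mat d ** transpose V"
  have UU': "X ** transpose U ** U = X ** E" and VV': "X ** transpose V ** V = X ** E"
    and ED': "X ** E ** diag_mat d = X ** diag_mat d" for X :: "real^'n^'n"
    by (simp_all add: UU VV ED flip: matrix_mul_assoc)
  have "psd P"
    unfolding P_def using d by (rule psd_conj_diag_mat)
  moreover have "P ** P = transpose (U ** diag_mat d ** transpose V) ** (U ** diag_mat d ** transpose V)"
    by (simp add: P_def matrix_transpose_mul matrix_mul_assoc UU' VV')
  ultimately have "nuc_norm (U ** diag_mat d ** transpose V) = trace P"
    by (rule nuc_norm_eqI)
  also have "\<dots> = (U ** transpose V) \<bullet> (U ** diag_mat d ** transpose V)"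
    by (simp add: P_def inner_matrix_eq_trace matrix_transpose_mul matrix_mul_assoc UU' ED')
  finally show ?thesis .
qed

section \<open>Strict subgradient inequalities\<close>

lemma norm_mult_transpose_add_le:
  fixes U V W :: "real^'n^'n"
  assumes UV: "transpose U ** U = transpose V ** V" and V: "V ** (transpose V ** V) = V"
    and UW: "transpose U ** W = 0" and WV: "W ** V = 0"
    and W: "\<And>x. norm (W *v x) \<le> norm x"
  shows "norm ((U ** transpose V + W) *v x) \<le> norm x"
proof -
  \<comment> \<open>Split \<open>x = V V\<^sup>T x + x2\<close>: \<open>U V\<^sup>T\<close> is isometric on the first part and kills \<open>x2\<close>,
    \<open>W\<close> kills the first part, and the two images are orthogonal.\<close>
  note transpose_matrix_vector [simp del]
  have adj: "(A *v u) \<bullet> (B *v v) = u \<bullet> ((transpose A ** B) *v v)" for A B :: "real^'n^'n" and u v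
    using inner_transpose_matrix_vector[of "transpose A" u "B *v v"]
    by (simp add: matrix_vector_mul_assoc)
  have VtVVt: "transpose V ** V ** transpose V = transpose V"
    using arg_cong[OF V, of transpose] by (simp add: matrix_transpose_mul matrix_mul_assoc)
  define y where "y = transpose V *v x"
  define x1 where "x1 = V *v y"
  define x2 where "x2 = x - x1"
  have "transpose V *v x2 = 0"
    by (simp add: x2_def x1_def y_def matrix_vector_mult_diff_distrib matrix_vector_mul_assoc
        matrix_mul_assoc VtVVt)
  then have x1_x2: "x1 \<bullet> x2 = 0"
    by (simp add: x1_def adj[of V y "mat 1" x2, simplified])
  have "W *v x1 = 0"
    by (simp add: x1_def matrix_vector_mul_assoc WV)
  then have Wx: "W *v x = W *v x2"
    by (simp add: x2_def matrix_vector_mult_diff_distrib)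
  have UVx: "(U ** transpose V) *v x = U *v y"
    by (simp add: y_def matrix_vector_mul_assoc)
  have orth: "(U *v y) \<bullet> (W *v x2) = 0"
    by (simp add: adj UW)
  have "(U *v y) \<bullet> (U *v y) = x1 \<bullet> x1"
    by (simp add: x1_def adj UV)
  moreover have "(W *v x2) \<bullet> (W *v x2) \<le> x2 \<bullet> x2"
    using W by (simp add: norm_le)
  moreover have "x \<bullet> x = x1 \<bullet> x1 + x2 \<bullet> x2"
    using x1_x2 unfolding x2_def by (simp add: inner_diff_left inner_diff_right inner_commute)
  ultimately have "(U *v y + W *v x2) \<bullet> (U *v y + W *v x2) \<le> x \<bullet> x"
    using orth by (simp add: inner_add_left inner_add_right inner_commute)
  then show ?thesis
    by (simp add: norm_le matrix_vector_mult_add_rdistrib UVx Wx)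
qed

lemma spec_norm_bound: "norm (W *v x) \<le> spec_norm W * norm x"
  and spec_norm_nonneg: "0 \<le> spec_norm W"
  unfolding spec_norm_def
  using onorm onorm_pos_le matrix_vector_mul_linear linear_conv_bounded_linear by blast+

lemma small_perturbation_contraction:
  fixes W G :: "real^'n^'n"
  assumes "spec_norm W < 1"
  obtains \<epsilon> where "\<epsilon> > 0" "\<And>x. norm ((W + \<epsilon> *\<^sub>R G) *v x) \<le> norm x"
proof
  define c where "c = spec_norm G"
  define \<epsilon> where "\<epsilon> = (1 - spec_norm W) / (c + 1)"
  have "0 \<le> c"
    by (simp add: c_def spec_norm_nonneg)
  then show "\<epsilon> > 0"
    using assms by (simp add: \<epsilon>_def)
  have "\<epsilon> * c \<le> 1 - spec_norm W"
    using assms \<open>0 \<le> c\<close> by (simp add: \<epsilon>_def field_simps)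
  fix x
  have "norm ((W + \<epsilon> *\<^sub>R G) *v x) \<le> norm (W *v x) + \<epsilon> * norm (G *v x)"
    using \<open>\<epsilon> > 0\<close> norm_triangle_ineq[of "W *v x" "\<epsilon> *\<^sub>R (G *v x)"]
    by (simp add: matrix_vector_mult_add_rdistrib flip: scaleR_matrix_vector_assoc)
  also have "\<dots> \<le> spec_norm W * norm x + \<epsilon> * (c * norm x)"
    using \<open>\<epsilon> > 0\<close> unfolding c_def by (intro add_mono mult_left_mono spec_norm_bound) auto
  also have "\<dots> \<le> norm x"
    using \<open>\<epsilon> * c \<le> 1 - spec_norm W\<close> mult_right_mono[OF _ norm_ge_zero, of "\<epsilon> * c" "1 - spec_norm W" x]
    by (simp add: algebra_simps)
  finally show "norm ((W + \<epsilon> *\<^sub>R G) *v x) \<le> norm x" .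
qed

lemma nuc_norm_strict_subgradient:
  assumes svd: "reduced_svd L0 K U Sig V"
    and W_orth: "P_T U V W = 0" and W: "spec_norm W < 1"
  shows "\<exists>\<epsilon>>0. nuc_norm L0 + (U ** transpose V + W) \<bullet> H + \<epsilon> * (norm (H - P_T U V H))\<^sup>2
    \<le> nuc_norm (L0 + H)"
proof -
  define G where "G = H - P_T U V H"
  obtain \<epsilon> where "\<epsilon> > 0" and contr: "\<And>x. norm ((W + \<epsilon> *\<^sub>R G) *v x) \<le> norm x"
    using small_perturbation_contraction[OF W] by blast
  define W' where "W' = W + \<epsilon> *\<^sub>R G"
  have W'_orth: "\<forall>Z\<in>tangent_space U V. W' \<bullet> Z = 0"
    using P_T_eq_0_imp_orthogonal[OF W_orth] P_T_orthogonal[of _ U V H]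
    by (simp add: W'_def G_def inner_add_left)
  note svd_facts = reduced_svdD[OF svd]
  have "norm ((U ** transpose V + W') *v x) \<le> norm x" for x
  proof (rule norm_mult_transpose_add_le)
    show "transpose U ** U = transpose V ** V" "V ** (transpose V ** V) = V"
      using svd_facts(1-3) by simp_all
    show "transpose U ** W' = 0" "W' ** V = 0"
      using orthogonal_tangent_space_imp[OF W'_orth] by simp_all
    show "norm (W' *v x) \<le> norm x" for x
      unfolding W'_def by (rule contr)
  qed
  then have "(U ** transpose V + W') \<bullet> (L0 + H) \<le> nuc_norm (L0 + H)"
    by (rule inner_le_nuc_norm)
  moreover have "(U ** transpose V) \<bullet> L0 = nuc_norm L0"
    using nuc_norm_partial_isometry_factorization[OF svd_facts(1,2,4,5)] svd_facts(6) by simp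
  moreover have "W' \<bullet> L0 = 0"
    using W'_orth by (subst svd_facts(6)) (simp add: mult_mult_transpose_in_tangent_space)
  moreover have "G \<bullet> H = (norm G)\<^sup>2"
  proof -
    have "G \<bullet> H = G \<bullet> G + G \<bullet> P_T U V H"
      by (simp add: G_def inner_diff_left inner_diff_right inner_commute)
    then show ?thesis
      using P_T_orthogonal[OF P_T_in_tangent_space[of U V H], of H]
      by (simp add: G_def power2_norm_eq_inner)
  qed
  ultimately show ?thesis
    using \<open>\<epsilon> > 0\<close>
    by (intro exI[of _ \<epsilon>]) (simp add: W'_def inner_add_left inner_add_right G_def[symmetric])
qed

lemma abs_add_ge_sgn_mult: "\<bar>s\<bar> + sgn s * d \<le> \<bar>s + d\<bar>" for s d :: real
  by (cases s "0::real" rule: linorder_cases) auto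

lemma max_norm_ge_entry: "\<bar>F $ i $ j\<bar> \<le> max_norm F"
  unfolding max_norm_def
proof (rule Max_ge)
  have "{\<bar>F $ i $ j\<bar> |i j. True} = (\<lambda>(i, j). \<bar>F $ i $ j\<bar>) ` UNIV"
    by auto
  then show "finite {\<bar>F $ i $ j\<bar> |i j. True}"
    by simp
qed auto

lemma l1_norm_nonneg: "0 \<le> l1_norm X"
  unfolding l1_norm_def by (intro sum_nonneg) auto

lemma l1_norm_eq_0_iff: "l1_norm X = 0 \<longleftrightarrow> X = 0"
  unfolding l1_norm_def by (simp add: sum_nonneg sum_nonneg_eq_0_iff vec_eq_iff)

lemma P_idx_eq_0_iff: "P_idx A X = 0 \<longleftrightarrow> (\<forall>i j. (i, j) \<in> A \<longrightarrow> X $ i $ j = 0)"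
  by (auto simp: P_idx_def vec_eq_iff)

lemma inner_eq_0_if_disjoint_support:
  fixes X Y :: "real^'m^'n"
  assumes "\<And>i j. (i, j) \<in> A \<Longrightarrow> X $ i $ j = 0" "\<And>i j. (i, j) \<notin> A \<Longrightarrow> Y $ i $ j = 0"
  shows "Y \<bullet> X = 0"
proof -
  have "Y $ i $ j * X $ i $ j = 0" for i j
    using assms by (cases "(i, j) \<in> A") auto
  then show ?thesis
    unfolding inner_vec_def inner_real_def by (simp only: sum.neutral_const)
qed

lemma l1_norm_strict_subgradient:
  fixes S0 F D :: "real^'n^'n"
  assumes S0: "\<And>i j. (i, j) \<notin> A \<Longrightarrow> S0 $ i $ j = 0"
    and F: "\<And>i j. (i, j) \<in> A \<Longrightarrow> F $ i $ j = 0"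
  shows "l1_norm S0 + (sgn_mat S0 + F) \<bullet> D + (1 - max_norm F) * l1_norm (P_idx (- A) D)
    \<le> l1_norm (S0 + D)"
proof -
  have entry: "\<bar>S0 $ i $ j\<bar> + (sgn_mat S0 + F) $ i $ j * D $ i $ j
      + (1 - max_norm F) * \<bar>P_idx (- A) D $ i $ j\<bar> \<le> \<bar>(S0 + D) $ i $ j\<bar>" for i j
  proof (cases "(i, j) \<in> A")
    case True
    then show ?thesis
      by (simp add: F P_idx_def sgn_mat_def abs_add_ge_sgn_mult)
  next
    case False
    have "F $ i $ j * D $ i $ j \<le> \<bar>F $ i $ j\<bar> * \<bar>D $ i $ j\<bar>"
      by (metis abs_ge_self abs_mult)
    also have "\<dots> \<le> max_norm F * \<bar>D $ i $ j\<bar>"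
      by (intro mult_right_mono max_norm_ge_entry) simp
    finally have "F $ i $ j * D $ i $ j \<le> max_norm F * \<bar>D $ i $ j\<bar>" .
    then show ?thesis
      using False by (simp add: S0 P_idx_def sgn_mat_def algebra_simps)
  qed
  have "l1_norm S0 + (sgn_mat S0 + F) \<bullet> D + (1 - max_norm F) * l1_norm (P_idx (- A) D)
      = (\<Sum>i\<in>UNIV. \<Sum>j\<in>UNIV. \<bar>S0 $ i $ j\<bar> + (sgn_mat S0 + F) $ i $ j * D $ i $ j
          + (1 - max_norm F) * \<bar>P_idx (- A) D $ i $ j\<bar>)"
    by (simp add: l1_norm_def inner_vec_def sum.distrib sum_distrib_left)
  also have "\<dots> \<le> l1_norm (S0 + D)"
    unfolding l1_norm_def by (intro sum_mono entry)
  finally show ?thesis .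
qed

section \<open>Optimality and uniqueness\<close>

lemma feasible_iff:
  assumes "\<And>i j. (i, j) \<notin> Obs \<Longrightarrow> S0 $ i $ j = 0"
  shows "feasible Obs L0 S0 L S \<longleftrightarrow>
    (\<forall>i j. (i, j) \<in> Obs \<longrightarrow> (L - L0 + (S - S0)) $ i $ j = 0)"
  unfolding feasible_def vec_eq_iff P_idx_def using assms by (auto simp: algebra_simps)

lemma linear_fixed_point_eq_0:
  fixes f :: "'a::euclidean_space \<Rightarrow> 'a"
  assumes "linear f" "onorm f < 1" "f x = x"
  shows "x = 0"
proof -
  have "norm x \<le> onorm f * norm x"
    using onorm[of f x] assms(1,3) by (simp add: linear_conv_bounded_linear)
  then have "(1 - onorm f) * norm x \<le> 0"
    by (simp add: algebra_simps)
  then show ?thesis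
    using assms(2) by (simp add: mult_le_0_iff)
qed

lemma objective_strict_gain:
  assumes svd: "reduced_svd L0 K U Sig V" and lam: "lam > 0"
    and W_orth: "P_T U V W = 0" and W: "spec_norm W < 1"
    and cert: "U ** transpose V + W = lam *\<^sub>R (sgn_mat S0 + F)"
    and S0: "\<And>i j. (i, j) \<notin> Om \<Longrightarrow> S0 $ i $ j = 0"
    and F: "P_idx (- (Obs - Om)) F = 0" and Om_Obs: "Om \<subseteq> Obs"
    and feas: "feasible Obs L0 S0 L S"
  shows "\<exists>\<epsilon>>0. objective lam L0 S0 + \<epsilon> * (norm (L - L0 - P_T U V (L - L0)))\<^sup>2
      + lam * (1 - max_norm F) * l1_norm (P_idx (- Om) (S - S0)) \<le> objective lam L S"
proof -
  define H D Z where "H = L - L0" and "D = S - S0" and "Z = sgn_mat S0 + F"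
  have S0_Obs: "\<And>i j. (i, j) \<notin> Obs \<Longrightarrow> S0 $ i $ j = 0"
    using S0 Om_Obs by blast
  have F_Om: "\<And>i j. (i, j) \<in> Om \<Longrightarrow> F $ i $ j = 0"
    and F_Obs: "\<And>i j. (i, j) \<notin> Obs \<Longrightarrow> F $ i $ j = 0"
    using F by (auto simp: P_idx_eq_0_iff)
  obtain \<epsilon> where "\<epsilon> > 0"
    and nuc: "nuc_norm L0 + (lam *\<^sub>R Z) \<bullet> H + \<epsilon> * (norm (H - P_T U V H))\<^sup>2 \<le> nuc_norm L"
    using nuc_norm_strict_subgradient[OF svd W_orth W, of H] cert by (auto simp: H_def Z_def)
  have "l1_norm S0 + Z \<bullet> D + (1 - max_norm F) * l1_norm (P_idx (- Om) D) \<le> l1_norm S"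
    using l1_norm_strict_subgradient[of Om S0 F D] S0 F_Om by (simp add: Z_def D_def)
  then have "lam * (l1_norm S0 + Z \<bullet> D + (1 - max_norm F) * l1_norm (P_idx (- Om) D))
      \<le> lam * l1_norm S"
    using lam by (intro mult_left_mono) auto
  then have l1: "lam * l1_norm S0 + (lam *\<^sub>R Z) \<bullet> D + lam * (1 - max_norm F) * l1_norm (P_idx (- Om) D)
      \<le> lam * l1_norm S"
    by (simp add: distrib_left mult.assoc)
  have "Z \<bullet> (H + D) = 0"
  proof (rule inner_eq_0_if_disjoint_support)
    show "(H + D) $ i $ j = 0" if "(i, j) \<in> Obs" for i j
      using feas that by (simp add: feasible_iff[OF S0_Obs] H_def D_def)
    show "Z $ i $ j = 0" if "(i, j) \<notin> Obs" for i j
      using that by (simp add: Z_def sgn_mat_def S0_Obs F_Obs)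
  qed
  then have "(lam *\<^sub>R Z) \<bullet> H + (lam *\<^sub>R Z) \<bullet> D = 0"
    by (simp add: inner_add_right flip: distrib_left)
  then show ?thesis
    using nuc l1 \<open>\<epsilon> > 0\<close> unfolding objective_def H_def D_def
    by (intro exI[of _ \<epsilon>]) linarith
qed

lemma feasible_eq_if_tangent_and_supported:
  assumes Om_Obs: "Om \<subseteq> Obs"
    and opnorm: "onorm (\<lambda>M. P_idx (- (Obs - Om)) (P_T U V M)) < 1"
    and S0: "\<And>i j. (i, j) \<notin> Om \<Longrightarrow> S0 $ i $ j = 0"
    and feas: "feasible Obs L0 S0 L S"
    and tangent: "P_T U V (L - L0) = L - L0"
    and off_Om: "\<And>i j. (i, j) \<notin> Om \<Longrightarrow> S $ i $ j = S0 $ i $ j"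
  shows "L = L0 \<and> S = S0"
proof -
  have S0_Obs: "\<And>i j. (i, j) \<notin> Obs \<Longrightarrow> S0 $ i $ j = 0"
    using S0 Om_Obs by blast
  have feas_entry: "(L - L0 + (S - S0)) $ i $ j = 0" if "(i, j) \<in> Obs" for i j
    using feas that by (simp add: feasible_iff[OF S0_Obs])
  have "L $ i $ j = L0 $ i $ j" if "(i, j) \<in> Obs - Om" for i j
    using feas_entry[of i j] off_Om[of i j] that by simp
  then have "P_idx (- (Obs - Om)) (L - L0) = L - L0"
    by (auto simp: P_idx_def vec_eq_iff)
  then have "L - L0 = 0"
    using linear_compose[OF linear_P_T linear_P_idx] opnorm tangent
    by (intro linear_fixed_point_eq_0[of "\<lambda>M. P_idx (- (Obs - Om)) (P_T U V M)"]) (simp_all add: o_def)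
  moreover have "S $ i $ j = S0 $ i $ j" for i j
    using feas_entry[of i j] off_Om[of i j] Om_Obs \<open>L - L0 = 0\<close> by auto
  ultimately show ?thesis
    by (simp add: vec_eq_iff)
qed

lemma weighted_gain_nonneg_and_eq_0_imp:
  fixes \<epsilon> c :: real
  assumes "\<epsilon> > 0" "c > 0"
  shows "0 \<le> \<epsilon> * (norm G)\<^sup>2 + c * l1_norm X"
    and "\<epsilon> * (norm G)\<^sup>2 + c * l1_norm X = 0 \<Longrightarrow> G = 0 \<and> X = 0"
proof -
  have "0 \<le> \<epsilon> * (norm G)\<^sup>2" "0 \<le> c * l1_norm X"
    using assms l1_norm_nonneg[of X] by simp_all
  then show "0 \<le> \<epsilon> * (norm G)\<^sup>2 + c * l1_norm X"
    by linarith
  assume "\<epsilon> * (norm G)\<^sup>2 + c * l1_norm X = 0"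
  with \<open>0 \<le> \<epsilon> * (norm G)\<^sup>2\<close> \<open>0 \<le> c * l1_norm X\<close> have "\<epsilon> * (norm G)\<^sup>2 = 0" "c * l1_norm X = 0"
    by linarith+
  then show "G = 0 \<and> X = 0"
    using assms by (simp add: l1_norm_eq_0_iff)
qed

lemma unique_solutionI:
  assumes "feasible Obs L0 S0 L0 S0"
    and "\<And>L S. feasible Obs L0 S0 L S \<Longrightarrow>
      \<exists>g\<ge>0. objective lam L0 S0 + g \<le> objective lam L S \<and> (g = 0 \<longrightarrow> L = L0 \<and> S = S0)"
  shows "unique_solution lam Obs L0 S0 L0 S0"
  unfolding unique_solution_def
proof (intro conjI allI impI)
  fix L S
  show "feasible Obs L0 S0 L S \<Longrightarrow> objective lam L0 S0 \<le> objective lam L S"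
    using assms(2) by force
  assume "feasible Obs L0 S0 L S \<and> objective lam L S = objective lam L0 S0"
  then show "L = L0" "S = S0"
    using assms(2)[of L S] by force+
qed (fact assms(1))

theorem lemma7p1:
  fixes L0 U Sig V S0' :: "real^'n::finite^'n" and K :: "'n set"
    and lam :: real and Obs Om Gam :: "('n \<times> 'n) set"
  assumes svd: "reduced_svd L0 K U Sig V"
    and lam_pos: "lam > 0"
    and Om_sub: "Om \<subseteq> Obs"
    and Gam_def: "Gam = Obs - Om"
    and supp: "\<forall>i j. (i, j) \<notin> Om \<longrightarrow> S0' $ i $ j = 0"
    and opnorm: "onorm (\<lambda>M. P_idx (- Gam) (P_T U V M)) < 1"
    and cert: "\<exists>W F. U ** transpose V + W = lam *\<^sub>R (sgn_mat S0' + F) \<and>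
                     P_T U V W = 0 \<and> spec_norm W < 1 \<and>
                     P_idx (- Gam) F = 0 \<and> max_norm F < 1"
  shows "unique_solution lam Obs L0 S0' L0 S0'"
proof -
  obtain W F where WF: "U ** transpose V + W = lam *\<^sub>R (sgn_mat S0' + F)"
    "P_T U V W = 0" "spec_norm W < 1" and F: "P_idx (- Gam) F = 0" "max_norm F < 1"
    using cert by blast
  have S0: "\<And>i j. (i, j) \<notin> Om \<Longrightarrow> S0' $ i $ j = 0"
    using supp by blast
  show ?thesis
  proof (rule unique_solutionI)
    show "feasible Obs L0 S0' L0 S0'"
      using S0 Om_sub by (subst feasible_iff) auto
    fix L S assume feas: "feasible Obs L0 S0' L S"
    obtain \<epsilon> where "\<epsilon> > 0" and gain: "objective lam L0 S0' + \<epsilon> * (norm (L - L0 - P_T U V (L - L0)))\<^sup>2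
        + lam * (1 - max_norm F) * l1_norm (P_idx (- Om) (S - S0')) \<le> objective lam L S"
      using objective_strict_gain[OF svd lam_pos WF(2,3,1) S0 F(1)[unfolded Gam_def] Om_sub feas] by blast
    define g where "g = \<epsilon> * (norm (L - L0 - P_T U V (L - L0)))\<^sup>2
      + lam * (1 - max_norm F) * l1_norm (P_idx (- Om) (S - S0'))"
    have "lam * (1 - max_norm F) > 0"
      using lam_pos F(2) by simp
    note g = weighted_gain_nonneg_and_eq_0_imp[OF \<open>\<epsilon> > 0\<close> this,
        of "L - L0 - P_T U V (L - L0)" "P_idx (- Om) (S - S0')", folded g_def]
    have "L = L0 \<and> S = S0'" if "g = 0"
    proof (rule feasible_eq_if_tangent_and_supported[OF Om_sub opnorm[unfolded Gam_def] S0 feas])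
      have "L - L0 - P_T U V (L - L0) = 0" "P_idx (- Om) (S - S0') = 0"
        using g(2) that by blast+
      then show "P_T U V (L - L0) = L - L0" "\<And>i j. (i, j) \<notin> Om \<Longrightarrow> S $ i $ j = S0' $ i $ j"
        by (simp_all add: P_idx_eq_0_iff)
    qed
    then show "\<exists>g\<ge>0. objective lam L0 S0' + g \<le> objective lam L S \<and> (g = 0 \<longrightarrow> L = L0 \<and> S = S0')"
      using g(1) gain by (intro exI[of _ g]) (simp add: g_def add.assoc)
  qed
qed

end
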